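(* Let $u=a_1\cdots a_n$ be the input of the following algorithm and let $P_i$ be the set of positions it computes for position $i$. Algorithm: for all $a\in A$ set $n_a\gets 1$, $Q_a\gets\emptyset$; for $i=1,\ldots,n$ with $a_i=c$: set $x_i\gets n_c$, $P_i\gets Q_c$; then $n_c\gets n_c+1$, $Q_c\gets\{i\}$; then for all $a\in A$: if $n_c<n_a$ set $n_a\gets n_c$, $Q_a\gets Q_c$, else if $n_c=n_a$ set $Q_a\gets Q_a\cup Q_c$. Then, if $i$ is a $c$-position, $R^u_i = \bigcup_{j \in P_i} R^u_j \, \mathsf{X}_c$, with the convention $\bigcup_{j\in\emptyset} R^u_j\,\mathsf{X}_c=\{\mathsf{X}_c\}$.
   Context: $A$ is a finite alphabet. An $\mathsf{X}$-ranker is a nonempty word over $\{\mathsf{X}_a : a\in A\}$, evaluated on a word $w$ by: $\mathsf{X}_a(w)$ is the smallest $a$-position of $w$ and $r\mathsf{X}_a(w)$ is the smallest $a$-position greater than $r(w)$ (possibly undefined). For a position $i$ of $u$, $x_i$ is the length of a shortest $\mathsf{X}$-ranker reaching $i$, and $R^u_i$ is the set of $\mathsf{X}$-rankers $r$ with $r(u)=i$ and $|r|=x_i$. *)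

theory Defs
  imports Main
begin

(* Words are lists; positions are 1-based: position j of w (1 <= j <= length w) carries w!(j-1).
   An X-ranker X_{b1}...X_{bk} is represented by the nonempty list [b1,...,bk]. *)

definition next_pos :: "'a list \<Rightarrow> 'a \<Rightarrow> nat \<Rightarrow> nat option" where
  "next_pos w a k =
     (if \<exists>j. k < j \<and> j \<le> length w \<and> w ! (j - 1) = a
      then Some (LEAST j. k < j \<and> j \<le> length w \<and> w ! (j - 1) = a)
      else None)"

(* evaluation r(w) of an X-ranker r (meaningful for r \<noteq> []) *)
definition rank_eval :: "'a list \<Rightarrow> 'a list \<Rightarrow> nat option" where
  "rank_eval r w = foldl (\<lambda>p a. Option.bind p (next_pos w a)) (Some 0) r"

definition xlen :: "'a list \<Rightarrow> nat \<Rightarrow> nat" where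
  "xlen u i = (LEAST k. \<exists>r. r \<noteq> [] \<and> rank_eval r u = Some i \<and> length r = k)"

definition Rset :: "'a list \<Rightarrow> nat \<Rightarrow> 'a list set" where
  "Rset u i = {r. r \<noteq> [] \<and> rank_eval r u = Some i \<and> length r = xlen u i}"

definition alg_step :: "('a \<Rightarrow> nat) \<times> ('a \<Rightarrow> nat set) \<Rightarrow> nat \<Rightarrow> 'a
                         \<Rightarrow> ('a \<Rightarrow> nat) \<times> ('a \<Rightarrow> nat set)" where
  "alg_step st i c =
     (let n1 = (fst st)(c := fst st c + 1);
          Q1 = (snd st)(c := {i});
          nc = n1 c; Qc = Q1 c
      in (\<lambda>a. if nc < n1 a then nc else n1 a,
          \<lambda>a. if nc < n1 a then Qc else if nc = n1 a then Q1 a \<union> Qc else Q1 a))"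

fun alg_state :: "'a list \<Rightarrow> nat \<Rightarrow> ('a \<Rightarrow> nat) \<times> ('a \<Rightarrow> nat set)" where
  "alg_state u 0 = (\<lambda>_. 1, \<lambda>_. {})"
| "alg_state u (Suc k) = alg_step (alg_state u k) (Suc k) (u ! k)"

definition Pset :: "'a list \<Rightarrow> nat \<Rightarrow> nat set" where
  "Pset u i = snd (alg_state u (i - 1)) (u ! (i - 1))"

end

theory Submission
  imports Defs
begin

(* Let p be the last c-position before the c-position i (p = 0 if there is none). From a position j,
   the ranker step X_c leads to i exactly when p <= j < i. Letting the empty ranker reach the virtual
   position 0, every ranker reaching i is therefore s X_c with s a ranker reaching some j in the window
   [p, i), so x_i is one more than the minimum of x_j over the window, and R_i is the union of R_j X_c
   over the minimisers j. After k positions have been processed, the algorithm keeps n_a equal to one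
   more than the minimum of x_j over [p_a, k], p_a being the last a-position up to k, and Q_a equal to
   the set of nonzero minimisers. The minimiser 0 occurs exactly when p = 0; it is what the convention
   for P_i = {} accounts for. *)

fun last_pos :: "'a list \<Rightarrow> 'a \<Rightarrow> nat \<Rightarrow> nat" where
  "last_pos u a 0 = 0"
| "last_pos u a (Suc k) = (if u ! k = a then Suc k else last_pos u a k)"

lemma last_pos_le: "last_pos u a k \<le> k"
  by (induction k) auto

lemma nth_last_pos: "last_pos u a k \<noteq> 0 \<Longrightarrow> u ! (last_pos u a k - 1) = a"
  by (induction k) auto

lemma nth_neq_after_last_pos: "last_pos u a k < j \<Longrightarrow> j \<le> k \<Longrightarrow> u ! (j - 1) \<noteq> a"
proof (induction k)
  case (Suc k)
  then show ?case by (cases "j = Suc k") (auto split: if_splits)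
qed simp

lemma next_pos_SomeD:
  assumes "next_pos u c j = Some i"
  shows "j < i" and "i \<le> length u" and "u ! (i - 1) = c"
    and "\<And>i'. j < i' \<Longrightarrow> i' \<le> length u \<Longrightarrow> u ! (i' - 1) = c \<Longrightarrow> i \<le> i'"
proof -
  let ?P = "\<lambda>i. j < i \<and> i \<le> length u \<and> u ! (i - 1) = c"
  from assms have "\<exists>i. ?P i" and least: "(LEAST i. ?P i) = i"
    unfolding next_pos_def by (auto split: if_splits)
  with LeastI_ex[of ?P] show "j < i" and "i \<le> length u" and "u ! (i - 1) = c"
    by simp_all
  show "i \<le> i'" if "j < i'" "i' \<le> length u" "u ! (i' - 1) = c" for i'
    using that Least_le[of ?P i'] unfolding least by blast
qed

lemma next_pos_eq_Some_iff:
  assumes "1 \<le> i" "i \<le> length u" "u ! (i - 1) = c"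
  shows "next_pos u c j = Some i \<longleftrightarrow> j \<in> {last_pos u c (i - 1)..<i}"
proof
  let ?p = "last_pos u c (i - 1)"
  assume step: "next_pos u c j = Some i"
  have "?p \<le> j"
  proof (rule ccontr)
    assume "\<not> ?p \<le> j"
    moreover have "?p \<le> i - 1" by (rule last_pos_le)
    ultimately have "i \<le> ?p"
      using next_pos_SomeD(4)[OF step] nth_last_pos[of u c "i - 1"] assms(2) by simp
    with \<open>?p \<le> i - 1\<close> assms(1) show False by simp
  qed
  with next_pos_SomeD(1)[OF step] show "j \<in> {?p..<i}" by simp
next
  assume j: "j \<in> {last_pos u c (i - 1)..<i}"
  have "i \<le> i'" if "j < i'" "u ! (i' - 1) = c" for i'
  proof (rule ccontr)
    assume "\<not> i \<le> i'"
    then have "last_pos u c (i - 1) < i'" "i' \<le> i - 1" using j that(1) by auto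
    from nth_neq_after_last_pos[OF this] that(2) show False by simp
  qed
  then have "(LEAST i'. j < i' \<and> i' \<le> length u \<and> u ! (i' - 1) = c) = i"
    using j assms by (intro Least_equality) auto
  then show "next_pos u c j = Some i"
    using j assms unfolding next_pos_def by auto
qed

lemma rank_eval_Nil [simp]: "rank_eval [] u = Some 0"
  by (simp add: rank_eval_def)

lemma rank_eval_snoc_eq_Some_iff:
  "rank_eval (s @ [a]) u = Some i \<longleftrightarrow> (\<exists>j. rank_eval s u = Some j \<and> next_pos u a j = Some i)"
  by (cases "rank_eval s u") (auto simp: rank_eval_def)

lemma rank_eval_eq_Some_0_iff: "rank_eval r u = Some 0 \<longleftrightarrow> r = []"
proof (induction r rule: rev_induct)
  case (snoc a s)
  then show ?case by (auto simp: rank_eval_snoc_eq_Some_iff dest: next_pos_SomeD(1))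
qed simp

lemma rank_eval_reaches_all: "j \<le> length u \<Longrightarrow> \<exists>r. rank_eval r u = Some j"
proof (induction j)
  case (Suc j)
  then obtain r where "rank_eval r u = Some j" by auto
  moreover have "next_pos u (u ! j) j = Some (Suc j)"
    using Suc.prems last_pos_le[of u "u ! j" j] by (subst next_pos_eq_Some_iff) auto
  ultimately have "rank_eval (r @ [u ! j]) u = Some (Suc j)"
    by (auto simp: rank_eval_snoc_eq_Some_iff)
  then show ?case ..
qed (auto intro: exI[of _ "[]"])

lemma rank_eval_eq_Some_c_position_iff:
  assumes "1 \<le> i" "i \<le> length u" "u ! (i - 1) = c"
  shows "rank_eval r u = Some i \<longleftrightarrow>
           (\<exists>s j. r = s @ [c] \<and> rank_eval s u = Some j \<and> j \<in> {last_pos u c (i - 1)..<i})"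
proof
  assume r: "rank_eval r u = Some i"
  with assms(1) have "r \<noteq> []" by auto
  then obtain s a where "r = s @ [a]" by (metis rev_exhaust)
  with r obtain j where "rank_eval s u = Some j" "next_pos u a j = Some i"
    by (auto simp: rank_eval_snoc_eq_Some_iff)
  moreover from next_pos_SomeD(3)[OF this(2)] assms(3) have "a = c" by simp
  ultimately show "\<exists>s j. r = s @ [c] \<and> rank_eval s u = Some j \<and> j \<in> {last_pos u c (i - 1)..<i}"
    using \<open>r = s @ [a]\<close> next_pos_eq_Some_iff[OF assms] by auto
qed (auto simp: rank_eval_snoc_eq_Some_iff next_pos_eq_Some_iff[OF assms])

text \<open>Variants of xlen and Rset in which the empty ranker is admitted: it reaches the virtual
  position 0, which thereby behaves like any other position.\<close>

definition reach_len :: "'a list \<Rightarrow> nat \<Rightarrow> nat" where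
  "reach_len u j = (LEAST k. \<exists>r. rank_eval r u = Some j \<and> length r = k)"

definition shortest_rankers :: "'a list \<Rightarrow> nat \<Rightarrow> 'a list set" where
  "shortest_rankers u j = {r. rank_eval r u = Some j \<and> length r = reach_len u j}"

lemma reach_len_le: "rank_eval r u = Some j \<Longrightarrow> reach_len u j \<le> length r"
  unfolding reach_len_def by (rule Least_le) auto

lemma shortest_rankers_nonempty:
  assumes "j \<le> length u"
  obtains r where "r \<in> shortest_rankers u j"
proof -
  from rank_eval_reaches_all[OF assms] have "\<exists>k r. rank_eval r u = Some j \<and> length r = k"
    by auto
  from LeastI_ex[OF this] show ?thesis
    using that unfolding shortest_rankers_def reach_len_def by auto
qed

lemma reach_len_0 [simp]: "reach_len u 0 = 0"
  using reach_len_le[of "[]" u 0] by simp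

lemma shortest_rankers_0: "shortest_rankers u 0 = {[]}"
  by (auto simp: shortest_rankers_def rank_eval_eq_Some_0_iff)

lemma reach_len_pos:
  assumes "1 \<le> j" "j \<le> length u"
  shows "0 < reach_len u j"
proof -
  obtain r where "r \<in> shortest_rankers u j"
    using shortest_rankers_nonempty[OF assms(2)] .
  with assms(1) show ?thesis
    by (cases r) (auto simp: shortest_rankers_def)
qed

lemma rank_eval_eq_Some_imp_nonempty: "rank_eval r u = Some j \<Longrightarrow> 1 \<le> j \<Longrightarrow> r \<noteq> []"
  by auto

lemma xlen_eq_reach_len:
  assumes "1 \<le> j"
  shows "xlen u j = reach_len u j"
proof -
  have "(\<exists>r. r \<noteq> [] \<and> rank_eval r u = Some j \<and> length r = k) \<longleftrightarrow>
        (\<exists>r. rank_eval r u = Some j \<and> length r = k)" for k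
    using rank_eval_eq_Some_imp_nonempty assms by blast
  then show ?thesis
    unfolding xlen_def reach_len_def by simp
qed

lemma Rset_eq_shortest_rankers:
  assumes "1 \<le> j"
  shows "Rset u j = shortest_rankers u j"
  using rank_eval_eq_Some_imp_nonempty assms
  unfolding Rset_def shortest_rankers_def xlen_eq_reach_len[OF assms] by blast

lemma reach_len_c_position:
  assumes "1 \<le> i" "i \<le> length u" "u ! (i - 1) = c"
  shows "reach_len u i = Suc (Min (reach_len u ` {last_pos u c (i - 1)..<i}))"
proof (rule antisym)
  let ?W = "{last_pos u c (i - 1)..<i}"
  have W: "finite ?W" "?W \<noteq> {}"
    using assms(1) last_pos_le[of u c "i - 1"] by auto
  then have "Min (reach_len u ` ?W) \<in> reach_len u ` ?W"
    by simp
  then obtain j where j: "j \<in> ?W" "reach_len u j = Min (reach_len u ` ?W)"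
    by (metis imageE)
  obtain s where s: "rank_eval s u = Some j" "length s = reach_len u j"
    using shortest_rankers_nonempty[of j u] j(1) assms(2) by (auto simp: shortest_rankers_def)
  with j(1) have "rank_eval (s @ [c]) u = Some i"
    unfolding rank_eval_eq_Some_c_position_iff[OF assms] by blast
  then have "reach_len u i \<le> length (s @ [c])"
    by (rule reach_len_le)
  with s(2) j(2) show "reach_len u i \<le> Suc (Min (reach_len u ` ?W))"
    by simp
  obtain r where r: "rank_eval r u = Some i" "length r = reach_len u i"
    using shortest_rankers_nonempty[OF assms(2)] by (auto simp: shortest_rankers_def)
  then obtain s j where "r = s @ [c]" "rank_eval s u = Some j" "j \<in> ?W"
    unfolding rank_eval_eq_Some_c_position_iff[OF assms] by blast
  from W \<open>j \<in> ?W\<close> have "Suc (Min (reach_len u ` ?W)) \<le> Suc (reach_len u j)"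
    by simp
  also have "\<dots> \<le> length r"
    using reach_len_le[OF \<open>rank_eval s u = Some j\<close>] \<open>r = s @ [c]\<close> by simp
  finally show "Suc (Min (reach_len u ` ?W)) \<le> reach_len u i"
    using r(2) by simp
qed

lemma shortest_rankers_c_position:
  assumes "1 \<le> i" "i \<le> length u" "u ! (i - 1) = c"
  defines "W \<equiv> {last_pos u c (i - 1)..<i}"
  shows "shortest_rankers u i =
           (\<Union>j\<in>{j\<in>W. reach_len u j = Min (reach_len u ` W)}. (\<lambda>r. r @ [c]) ` shortest_rankers u j)"
proof (intro equalityI subsetI)
  fix r assume "r \<in> shortest_rankers u i"
  then obtain s j where r: "r = s @ [c]" "rank_eval s u = Some j" "j \<in> W"
    "length r = reach_len u i"
    by (auto simp: shortest_rankers_def rank_eval_eq_Some_c_position_iff[OF assms(1-3)] W_def)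
  have "Min (reach_len u ` W) \<le> reach_len u j"
    using \<open>j \<in> W\<close> by (simp add: W_def)
  moreover have "reach_len u j \<le> length s"
    using reach_len_le[OF r(2)] .
  ultimately have "reach_len u j = Min (reach_len u ` W)" "length s = reach_len u j"
    using r(1,4) reach_len_c_position[OF assms(1-3)] by (simp_all add: W_def)
  with r show "r \<in> (\<Union>j\<in>{j\<in>W. reach_len u j = Min (reach_len u ` W)}.
                       (\<lambda>r. r @ [c]) ` shortest_rankers u j)"
    by (auto simp: shortest_rankers_def)
next
  fix r assume "r \<in> (\<Union>j\<in>{j\<in>W. reach_len u j = Min (reach_len u ` W)}.
                        (\<lambda>r. r @ [c]) ` shortest_rankers u j)"
  then show "r \<in> shortest_rankers u i"
    using reach_len_c_position[OF assms(1-3)]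
    by (auto simp: shortest_rankers_def rank_eval_eq_Some_c_position_iff[OF assms(1-3)] W_def)
qed

definition alg_invariant :: "'a list \<Rightarrow> nat \<Rightarrow> ('a \<Rightarrow> nat) \<times> ('a \<Rightarrow> nat set) \<Rightarrow> bool" where
  "alg_invariant u k st \<longleftrightarrow>
     (\<forall>a. fst st a = Suc (Min (reach_len u ` {last_pos u a k..k})) \<and>
          snd st a = {j\<in>{last_pos u a k..k}. 0 < j \<and> Suc (reach_len u j) = fst st a})"

lemma alg_invariant_alg_step:
  assumes inv: "alg_invariant u k (n, Q)" and k: "Suc k \<le> length u"
  shows "alg_invariant u (Suc k) (alg_step (n, Q) (Suc k) (u ! k))"
proof -
  define c where "c = u ! k"
  define W where "W a = {last_pos u a k..k}" for a
  have W: "finite (W a)" "W a \<noteq> {}" for a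
    using last_pos_le[of u a k] by (auto simp: W_def)
  have n: "n a = Suc (Min (reach_len u ` W a))"
    and Q: "Q a = {j\<in>W a. 0 < j \<and> Suc (reach_len u j) = n a}" for a
    using inv by (auto simp: alg_invariant_def W_def)
  have new: "reach_len u (Suc k) = n c"
    using reach_len_c_position[of "Suc k" u c] k
    by (simp add: c_def n W_def atLeastLessThanSuc_atLeastAtMost)
  have window_c: "{last_pos u c (Suc k)..Suc k} = {Suc k}"
    by (simp add: c_def)
  have window_other: "{last_pos u a (Suc k)..Suc k} = insert (Suc k) (W a)" if "a \<noteq> c" for a
    using that last_pos_le[of u a k] by (auto simp: c_def W_def)
  have Min_other: "Min (reach_len u ` insert (Suc k) (W a)) = min (n c) (Min (reach_len u ` W a))"
    for a using W[of a] new by simp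
  have Min_le_W: "Min (reach_len u ` W a) \<le> reach_len u j" if "j \<in> W a" for a j
    using W[of a] that by simp
  show ?thesis
    unfolding alg_invariant_def c_def[symmetric]
  proof (intro allI, goal_cases)
    case (1 a)
    show ?case
    proof (cases "a = c")
      case True
      then show ?thesis using new window_c by (auto simp: alg_step_def Let_def)
    next
      case False
      then show ?thesis
        using new window_other[OF False] Min_other[of a] n[of a] Q[of a]
        by (auto simp: alg_step_def Let_def dest: Min_le_W[of _ a])
    qed
  qed
qed

lemma alg_invariant_alg_state: "k \<le> length u \<Longrightarrow> alg_invariant u k (alg_state u k)"
proof (induction k)
  case 0
  then show ?case by (auto simp: alg_invariant_def)
next
  case (Suc k)
  then show ?case
    using alg_invariant_alg_step[of u k "fst (alg_state u k)" "snd (alg_state u k)"] by simp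
qed

lemma Pset_eq_nonzero_minimisers:
  assumes "1 \<le> i" "i \<le> length u" "u ! (i - 1) = c"
  defines "W \<equiv> {last_pos u c (i - 1)..<i}"
  shows "Pset u i = {j\<in>W. reach_len u j = Min (reach_len u ` W)} - {0}"
proof -
  have "alg_invariant u (i - 1) (alg_state u (i - 1))"
    using assms(2) by (intro alg_invariant_alg_state) simp
  moreover have "W = {last_pos u c (i - 1)..i - 1}"
    using assms(1) by (auto simp: W_def)
  ultimately show ?thesis
    unfolding alg_invariant_def Pset_def assms(3) by auto
qed

lemma reach_len_minimisers_eq_0:
  assumes "finite W" "0 \<in> W" "W \<subseteq> {..length u}"
  shows "{j\<in>W. reach_len u j = Min (reach_len u ` W)} = {0}"
proof -
  have "Min (reach_len u ` W) = 0"
    using assms(1,2) by (intro Min_eqI) (auto intro: rev_image_eqI)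
  moreover have "0 < reach_len u j" if "j \<in> W" "j \<noteq> 0" for j
    using that assms(3) by (intro reach_len_pos) auto
  ultimately show ?thesis
    using assms(2) by fastforce
qed

lemma Pset_Rset_first_occurrence:
  assumes "1 \<le> i" "i \<le> length u" "u ! (i - 1) = c" and "last_pos u c (i - 1) = 0"
  shows "Pset u i = {}" and "Rset u i = {[c]}"
proof -
  define W where "W = {last_pos u c (i - 1)..<i}"
  have "finite W" "0 \<in> W" "W \<subseteq> {..length u}"
    using assms(1,2,4) by (auto simp: W_def)
  then have minimisers: "{j\<in>W. reach_len u j = Min (reach_len u ` W)} = {0}"
    by (rule reach_len_minimisers_eq_0)
  show "Pset u i = {}"
    unfolding Pset_eq_nonzero_minimisers[OF assms(1-3)] W_def[symmetric] minimisers by simp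
  show "Rset u i = {[c]}"
    unfolding Rset_eq_shortest_rankers[OF assms(1)] shortest_rankers_c_position[OF assms(1-3)]
      W_def[symmetric] minimisers
    by (simp add: shortest_rankers_0)
qed

lemma Pset_Rset_repeated_occurrence:
  assumes "1 \<le> i" "i \<le> length u" "u ! (i - 1) = c" and "last_pos u c (i - 1) \<noteq> 0"
  shows "Pset u i \<noteq> {}" and "Rset u i = (\<Union>j\<in>Pset u i. (\<lambda>r. r @ [c]) ` Rset u j)"
proof -
  define W where "W = {last_pos u c (i - 1)..<i}"
  have "finite W" "W \<noteq> {}" "0 \<notin> W"
    using assms(1,4) last_pos_le[of u c "i - 1"] by (auto simp: W_def)
  then have "Min (reach_len u ` W) \<in> reach_len u ` W"
    by simp
  then obtain j where "j \<in> W" "reach_len u j = Min (reach_len u ` W)"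
    by (metis imageE)
  have P: "Pset u i = {j\<in>W. reach_len u j = Min (reach_len u ` W)}"
    unfolding Pset_eq_nonzero_minimisers[OF assms(1-3)] W_def[symmetric]
    using \<open>0 \<notin> W\<close> by blast
  with \<open>j \<in> W\<close> \<open>reach_len u j = Min (reach_len u ` W)\<close> show "Pset u i \<noteq> {}"
    by auto
  have "Rset u j = shortest_rankers u j" if "j \<in> Pset u i" for j
    using that \<open>0 \<notin> W\<close> P by (intro Rset_eq_shortest_rankers) (cases j, auto)
  then show "Rset u i = (\<Union>j\<in>Pset u i. (\<lambda>r. r @ [c]) ` Rset u j)"
    unfolding Rset_eq_shortest_rankers[OF assms(1)] shortest_rankers_c_position[OF assms(1-3)]
      W_def[symmetric] P[symmetric]
    by simp
qed

theorem proposition21: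
  fixes u :: "'a::finite list" and i :: nat and c :: 'a
  assumes "1 \<le> i" and "i \<le> length u" and "u ! (i - 1) = c"
  shows "Rset u i =
           (if Pset u i = {} then {[c]}
            else (\<Union>j\<in>Pset u i. (\<lambda>r. r @ [c]) ` Rset u j))"
proof (cases "last_pos u c (i - 1) = 0")
  case True
  with Pset_Rset_first_occurrence[OF assms] show ?thesis
    by simp
next
  case False
  with Pset_Rset_repeated_occurrence[OF assms] show ?thesis
    by simp
qed

end
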